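(* Let $\Omega\subset\mathbb{R}^2$ be an open domain and $z\in C^2(\Omega)$ a solution of $Az_{xx}+2Bz_{xy}+Cz_{yy}+z_{xx}z_{yy}-z_{xy}^2=E$, with $A,B,C,E\in C^2(\mathcal{U})$, $AC-B^2+E>0$ on $\mathcal{U}$, such that the closure of $\{(x,y,z,z_x,z_y)(x,y):(x,y)\in\Omega\}$ is a compact subset of $\mathcal{U}$. Let $\varepsilon\in\{-1,1\}$ be such that $\varepsilon\big((z_{xx}+C)dx^2+2(z_{xy}-B)dxdy+(z_{yy}+A)dy^2\big)$ is positive definite on $\Omega$. Then there exist constants $a,c>0$ such that the function $z^*(x,y)=z(x,y)+\frac{\varepsilon a}{2}x^2+\frac{\varepsilon c}{2}y^2$ has a locally strictly convex graph $\{(x,y,z^*(x,y))\}\subset\mathbb{R}^3$ (i.e. $\varepsilon D^2z^*$ is positive definite on $\Omega$).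
   Context: $\mathcal{U}\subset\mathbb{R}^5$ is open with coordinates $(x,y,z,p,q)$; coefficients are evaluated at $(x,y,z,z_x,z_y)$. The ellipticity $AC-B^2+E>0$ guarantees that the quadratic form above is definite, so such $\varepsilon$ exists (on connected $\Omega$). *)

theory Defs
  imports "HOL-Analysis.Analysis"
begin

definition dirderiv :: "('a::real_normed_vector \<Rightarrow> real) \<Rightarrow> 'a \<Rightarrow> 'a \<Rightarrow> real" where
  "dirderiv f v x = deriv (\<lambda>t. f (x + t *\<^sub>R v)) 0"

definition C1_on :: "'a::euclidean_space set \<Rightarrow> ('a \<Rightarrow> real) \<Rightarrow> bool" where
  "C1_on S f \<longleftrightarrow> continuous_on S f \<and>
     (\<forall>i\<in>Basis. \<forall>x\<in>S. (\<lambda>t. f (x + t *\<^sub>R i)) differentiable (at 0)) \<and>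
     (\<forall>i\<in>Basis. continuous_on S (dirderiv f i))"

definition C2_on :: "'a::euclidean_space set \<Rightarrow> ('a \<Rightarrow> real) \<Rightarrow> bool" where
  "C2_on S f \<longleftrightarrow> C1_on S f \<and> (\<forall>i\<in>Basis. C1_on S (dirderiv f i))"

definition px :: "(real \<times> real \<Rightarrow> real) \<Rightarrow> real \<times> real \<Rightarrow> real" where
  "px f = dirderiv f (1, 0)"
definition py :: "(real \<times> real \<Rightarrow> real) \<Rightarrow> real \<times> real \<Rightarrow> real" where
  "py f = dirderiv f (0, 1)"

definition jet1 :: "(real \<times> real \<Rightarrow> real) \<Rightarrow> real \<times> real \<Rightarrow> real \<times> real \<times> real \<times> real \<times> real" where
  "jet1 z w = (fst w, snd w, z w, px z w, py z w)"

end

theory Submission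
  imports Defs
begin

text \<open>Along \<Omega> the 1-jet of z stays in the compact set closure (jet1 z ` \<Omega>) \<subseteq> U, so A, B, C
  are bounded there by some M. Taking a = c = 2M + 1, the form \<epsilon> D^2 z* splits as the given
  positive definite form \<epsilon>((z_xx + C) d\<xi>^2 + 2(z_xy - B) d\<xi> d\<eta> + (z_yy + A) d\<eta>^2) plus the form
  with matrix ((a - \<epsilon>C, \<epsilon>B), (\<epsilon>B, a - \<epsilon>A)), which is diagonally dominant and hence positive
  semidefinite.\<close>

lemma diag_dominant_quadratic_form_nonneg:
  fixes a b c x y :: real
  assumes "\<bar>b\<bar> \<le> a" "\<bar>b\<bar> \<le> c"
  shows "0 \<le> a * x\<^sup>2 + 2 * b * x * y + c * y\<^sup>2"
proof -
  have "\<bar>2 * b * x * y\<bar> = \<bar>b\<bar> * (2 * \<bar>x * y\<bar>)"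
    by (simp add: abs_mult)
  also have "\<dots> \<le> \<bar>b\<bar> * (x\<^sup>2 + y\<^sup>2)"
    using sum_squares_bound[of "\<bar>x\<bar>" "\<bar>y\<bar>"]
    by (intro mult_left_mono) (simp_all add: abs_mult power2_eq_square)
  finally have "\<bar>2 * b * x * y\<bar> \<le> \<bar>b\<bar> * (x\<^sup>2 + y\<^sup>2)" .
  moreover have "\<bar>b\<bar> * x\<^sup>2 \<le> a * x\<^sup>2" "\<bar>b\<bar> * y\<^sup>2 \<le> c * y\<^sup>2"
    using assms by (simp_all add: mult_right_mono)
  ultimately show ?thesis
    by (simp add: distrib_left abs_le_iff)
qed

lemma sign_definite_form_diagonal_shift:
  fixes e r s t Av Bv Cv M a \<xi> \<eta> :: real
  assumes "e \<in> {-1, 1}" "\<bar>Av\<bar> \<le> M" "\<bar>Bv\<bar> \<le> M" "\<bar>Cv\<bar> \<le> M" "2 * M \<le> a"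
    and "e * ((r + Cv) * \<xi>\<^sup>2 + 2 * (s - Bv) * \<xi> * \<eta> + (t + Av) * \<eta>\<^sup>2) > 0"
  shows "e * ((r + e * a) * \<xi>\<^sup>2 + 2 * s * \<xi> * \<eta> + (t + e * a) * \<eta>\<^sup>2) > 0"
proof -
  have "\<bar>e * Bv\<bar> \<le> a - e * Cv" "\<bar>e * Bv\<bar> \<le> a - e * Av"
    using assms(1-5) by (auto simp: abs_le_iff)
  then have "0 \<le> (a - e * Cv) * \<xi>\<^sup>2 + 2 * (e * Bv) * \<xi> * \<eta> + (a - e * Av) * \<eta>\<^sup>2"
    by (rule diag_dominant_quadratic_form_nonneg)
  moreover have "e * ((r + e * a) * \<xi>\<^sup>2 + 2 * s * \<xi> * \<eta> + (t + e * a) * \<eta>\<^sup>2)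
      = e * ((r + Cv) * \<xi>\<^sup>2 + 2 * (s - Bv) * \<xi> * \<eta> + (t + Av) * \<eta>\<^sup>2)
        + ((a - e * Cv) * \<xi>\<^sup>2 + 2 * (e * Bv) * \<xi> * \<eta> + (a - e * Av) * \<eta>\<^sup>2)"
    using assms(1) by (auto simp: algebra_simps)
  ultimately show ?thesis
    using assms(6) by linarith
qed

lemma continuous_on_compact_common_bound:
  fixes f g h :: "'a::topological_space \<Rightarrow> real"
  assumes "compact K" "continuous_on K f" "continuous_on K g" "continuous_on K h"
  obtains M where "M \<ge> 0"
    and "\<And>u. u \<in> K \<Longrightarrow> \<bar>f u\<bar> \<le> M" "\<And>u. u \<in> K \<Longrightarrow> \<bar>g u\<bar> \<le> M" "\<And>u. u \<in> K \<Longrightarrow> \<bar>h u\<bar> \<le> M"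
proof -
  have "continuous_on K (\<lambda>u. (f u, g u, h u))"
    using assms(2-4) by (intro continuous_on_Pair)
  then obtain M where "M \<ge> 0" and M: "\<And>u. u \<in> K \<Longrightarrow> norm (f u, g u, h u) \<le> M"
    using continuous_on_compact_bound[OF assms(1)] by blast
  moreover have "\<bar>f u\<bar> \<le> M" "\<bar>g u\<bar> \<le> M" "\<bar>h u\<bar> \<le> M" if "u \<in> K" for u
    using M[OF that] norm_fst_le[of "f u" "(g u, h u)"] norm_snd_le[of "(g u, h u)" "f u"]
      norm_fst_le[of "g u" "h u"] norm_snd_le[of "h u" "g u"] by simp_all
  ultimately show ?thesis
    using that by blast
qed

lemma has_derivative_line_slice:
  assumes "(f has_derivative f') (at x)"
  shows "((\<lambda>t. f (x + t *\<^sub>R v)) has_real_derivative f' v) (at 0)"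
proof -
  have "((\<lambda>t. x + t *\<^sub>R v) has_derivative (\<lambda>t. t *\<^sub>R v)) (at 0)"
    by (auto intro!: derivative_eq_intros)
  then have "((\<lambda>t. f (x + t *\<^sub>R v)) has_derivative (\<lambda>t. f' (t *\<^sub>R v))) (at 0)"
    using assms by (auto intro: has_derivative_compose)
  moreover have "f' (t *\<^sub>R v) = t * f' v" for t
    using linear_scale[OF has_derivative_linear[OF assms]] by simp
  ultimately show ?thesis
    by (auto intro: has_derivative_imp_has_field_derivative)
qed

lemma dirderiv_add_has_derivative:
  assumes "(\<lambda>t. f (x + t *\<^sub>R v)) differentiable (at 0)" and "(g has_derivative g') (at x)"
  shows "dirderiv (\<lambda>y. f y + g y) v x = dirderiv f v x + g' v"
proof -
  have g: "((\<lambda>t. g (x + t *\<^sub>R v)) has_real_derivative g' v) (at 0)"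
    using assms(2) by (rule has_derivative_line_slice)
  then have "deriv (\<lambda>t. g (x + t *\<^sub>R v)) 0 = g' v"
    by (rule DERIV_imp_deriv)
  with g assms(1) show ?thesis
    unfolding dirderiv_def
    by (subst deriv_add) (auto simp: field_differentiable_def real_differentiable_def)
qed

lemma dirderiv_cong_open:
  assumes "open S" "x \<in> S" "\<And>y. y \<in> S \<Longrightarrow> f y = g y"
  shows "dirderiv f v x = dirderiv g v x"
proof -
  have "isCont (\<lambda>t::real. x + t *\<^sub>R v) 0"
    by (intro continuous_intros)
  then have "eventually (\<lambda>t. x + t *\<^sub>R v \<in> S) (at 0)"
    using assms(1,2) by (simp add: isCont_def tendsto_def)
  then have "eventually (\<lambda>t. x + t *\<^sub>R v \<in> S) (nhds 0)"
    using assms(2) by (simp add: eventually_nhds_conv_at)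
  then have "eventually (\<lambda>t. f (x + t *\<^sub>R v) = g (x + t *\<^sub>R v)) (nhds 0)"
    by (rule eventually_mono) (simp add: assms(3))
  then show ?thesis
    unfolding dirderiv_def by (rule deriv_cong_ev) simp
qed

lemma C1_on_line_slice_differentiable:
  "C1_on S f \<Longrightarrow> i \<in> Basis \<Longrightarrow> x \<in> S \<Longrightarrow> (\<lambda>t. f (x + t *\<^sub>R i)) differentiable (at 0)"
  unfolding C1_on_def by blast

lemma C2_on_partials_C1_on:
  "C2_on S f \<Longrightarrow> C1_on S f \<and> C1_on S (px f) \<and> C1_on S (py f)"
  unfolding C2_on_def px_def py_def by (simp add: Basis_prod_def)

lemma second_partials_add_diagonal_quadratic:
  fixes z :: "real \<times> real \<Rightarrow> real" and p q :: real
  assumes "open S" "C2_on S z" "w \<in> S"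
  defines "zq \<equiv> \<lambda>(x, y). z (x, y) + p / 2 * x\<^sup>2 + q / 2 * y\<^sup>2"
  shows "px (px zq) w = px (px z) w + p"
    and "py (px zq) w = py (px z) w"
    and "py (py zq) w = py (py z) w + q"
proof -
  define Q :: "real \<times> real \<Rightarrow> real" where "Q v = p / 2 * (fst v)\<^sup>2 + q / 2 * (snd v)\<^sup>2" for v
  have zq: "zq = (\<lambda>v. z v + Q v)"
    by (auto simp: zq_def Q_def fun_eq_iff)
  have DQ: "(Q has_derivative (\<lambda>h. p * fst v * fst h + q * snd v * snd h)) (at v)" for v
    unfolding Q_def by (auto intro!: derivative_eq_intros simp: power2_eq_square algebra_simps)
  have Dfst: "((\<lambda>v. p * fst v) has_derivative (\<lambda>h. p * fst h)) (at v)"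
    and Dsnd: "((\<lambda>v. q * snd v) has_derivative (\<lambda>h. q * snd h)) (at v)" for v :: "real \<times> real"
    by (auto intro!: derivative_eq_intros)
  have basis: "(1, 0) \<in> (Basis :: (real \<times> real) set)" "(0, 1) \<in> (Basis :: (real \<times> real) set)"
    by (simp_all add: Basis_prod_def)
  have C1: "C1_on S z" "C1_on S (px z)" "C1_on S (py z)"
    using C2_on_partials_C1_on[OF assms(2)] by simp_all
  have px_zq: "px zq v = px z v + p * fst v" and py_zq: "py zq v = py z v + q * snd v"
    if "v \<in> S" for v
    unfolding zq px_def py_def
    using dirderiv_add_has_derivative[OF C1_on_line_slice_differentiable[OF C1(1) basis(1) that] DQ]
      dirderiv_add_has_derivative[OF C1_on_line_slice_differentiable[OF C1(1) basis(2) that] DQ]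
    by simp_all
  have "px (px zq) w = px (\<lambda>v. px z v + p * fst v) w"
    unfolding px_def[of "px zq"] px_def[of "\<lambda>v. px z v + p * fst v"]
    by (rule dirderiv_cong_open[OF assms(1,3)]) (simp add: px_zq)
  also have "\<dots> = px (px z) w + p"
    using dirderiv_add_has_derivative
      [OF C1_on_line_slice_differentiable[OF C1(2) basis(1) assms(3)] Dfst] by (simp add: px_def)
  finally show "px (px zq) w = px (px z) w + p" .
  have "py (px zq) w = py (\<lambda>v. px z v + p * fst v) w"
    unfolding py_def[of "px zq"] py_def[of "\<lambda>v. px z v + p * fst v"]
    by (rule dirderiv_cong_open[OF assms(1,3)]) (simp add: px_zq)
  also have "\<dots> = py (px z) w"
    using dirderiv_add_has_derivative
      [OF C1_on_line_slice_differentiable[OF C1(2) basis(2) assms(3)] Dfst] by (simp add: py_def)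
  finally show "py (px zq) w = py (px z) w" .
  have "py (py zq) w = py (\<lambda>v. py z v + q * snd v) w"
    unfolding py_def[of "py zq"] py_def[of "\<lambda>v. py z v + q * snd v"]
    by (rule dirderiv_cong_open[OF assms(1,3)]) (simp add: py_zq)
  also have "\<dots> = py (py z) w + q"
    using dirderiv_add_has_derivative
      [OF C1_on_line_slice_differentiable[OF C1(3) basis(2) assms(3)] Dsnd] by (simp add: py_def)
  finally show "py (py zq) w = py (py z) w + q" .
qed

theorem mainTheorem7:
  fixes \<Omega> :: "(real \<times> real) set"
    and U :: "(real \<times> real \<times> real \<times> real \<times> real) set"
    and z :: "real \<times> real \<Rightarrow> real"
    and A B C E :: "real \<times> real \<times> real \<times> real \<times> real \<Rightarrow> real"
    and \<epsilon> :: real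
  assumes "open \<Omega>" and "connected \<Omega>"
    and "open U"
    and "C2_on \<Omega> z"
    and "C2_on U A" and "C2_on U B" and "C2_on U C" and "C2_on U E"
    and "\<forall>u\<in>U. A u * C u - (B u)\<^sup>2 + E u > 0"
    and "compact (closure (jet1 z ` \<Omega>))" and "closure (jet1 z ` \<Omega>) \<subseteq> U"
    and "\<forall>w\<in>\<Omega>. A (jet1 z w) * px (px z) w + 2 * B (jet1 z w) * py (px z) w
                 + C (jet1 z w) * py (py z) w + px (px z) w * py (py z) w - (py (px z) w)\<^sup>2
               = E (jet1 z w)"
    and "\<epsilon> \<in> {-1, 1}"
    and "\<forall>w\<in>\<Omega>. \<forall>\<xi> \<eta>. (\<xi>, \<eta>) \<noteq> (0, 0) \<longrightarrow>
           \<epsilon> * ((px (px z) w + C (jet1 z w)) * \<xi>\<^sup>2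
                + 2 * (py (px z) w - B (jet1 z w)) * \<xi> * \<eta>
                + (py (py z) w + A (jet1 z w)) * \<eta>\<^sup>2) > 0"
  shows "\<exists>a c. a > 0 \<and> c > 0 \<and>
           (let zs = (\<lambda>(x, y). z (x, y) + \<epsilon> * a / 2 * x\<^sup>2 + \<epsilon> * c / 2 * y\<^sup>2)
            in \<forall>w\<in>\<Omega>. \<forall>\<xi> \<eta>. (\<xi>, \<eta>) \<noteq> (0, 0) \<longrightarrow>
                 \<epsilon> * (px (px zs) w * \<xi>\<^sup>2 + 2 * py (px zs) w * \<xi> * \<eta>
                      + py (py zs) w * \<eta>\<^sup>2) > 0)"
proof -
  define K where "K = closure (jet1 z ` \<Omega>)"
  have "continuous_on K A" "continuous_on K B" "continuous_on K C"
    using assms(5-7,11) unfolding K_def C2_on_def C1_on_def by (auto intro: continuous_on_subset)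
  then obtain M where "M \<ge> 0" and bounds: "\<And>u. u \<in> K \<Longrightarrow> \<bar>A u\<bar> \<le> M"
    "\<And>u. u \<in> K \<Longrightarrow> \<bar>B u\<bar> \<le> M" "\<And>u. u \<in> K \<Longrightarrow> \<bar>C u\<bar> \<le> M"
    using continuous_on_compact_common_bound[OF assms(10)[folded K_def]] by blast
  have jet_in_K: "jet1 z w \<in> K" if "w \<in> \<Omega>" for w
    using that unfolding K_def by (intro closure_subset[THEN subsetD] imageI)
  define a where "a = 2 * M + 1"
  define zs where "zs = (\<lambda>(x, y). z (x, y) + \<epsilon> * a / 2 * x\<^sup>2 + \<epsilon> * a / 2 * y\<^sup>2)"
  have "\<forall>w\<in>\<Omega>. \<forall>\<xi> \<eta>::real. (\<xi>, \<eta>) \<noteq> (0, 0) \<longrightarrow>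
          \<epsilon> * (px (px zs) w * \<xi>\<^sup>2 + 2 * py (px zs) w * \<xi> * \<eta> + py (py zs) w * \<eta>\<^sup>2) > 0"
  proof (intro ballI allI impI)
    fix w and \<xi> \<eta> :: real
    assume "w \<in> \<Omega>" "(\<xi>, \<eta>) \<noteq> (0, 0)"
    show "\<epsilon> * (px (px zs) w * \<xi>\<^sup>2 + 2 * py (px zs) w * \<xi> * \<eta> + py (py zs) w * \<eta>\<^sup>2) > 0"
      unfolding zs_def second_partials_add_diagonal_quadratic[OF assms(1,4) \<open>w \<in> \<Omega>\<close>]
      by (rule sign_definite_form_diagonal_shift[OF assms(13) bounds[OF jet_in_K, OF \<open>w \<in> \<Omega>\<close>] _
            assms(14)[rule_format, OF \<open>w \<in> \<Omega>\<close> \<open>(\<xi>, \<eta>) \<noteq> (0, 0)\<close>]]) (simp add: a_def)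
  qed
  moreover have "a > 0"
    using \<open>M \<ge> 0\<close> by (simp add: a_def)
  ultimately show ?thesis
    unfolding zs_def Let_def by blast
qed

end
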